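(* For types $\sigma,\tau\in\mathbb{T}_C$: $\sigma\le\tau$ if and only if for each path $\pi\in\mathbb{P}(\tau)$ there exists a path $\pi'\in\mathbb{P}(\sigma)$ with $\pi'\le\pi$ such that: if $\pi\equiv\alpha$ (resp. $\pi\equiv a$) then $\pi'\equiv\alpha$ (resp. $\pi'\equiv a$); if $\pi\equiv\sigma_2\to\tau_2$ then $\pi'\equiv\sigma_1\to\tau_1$ with $\sigma_2\le\sigma_1$ and $\tau_1\le\tau_2$; if $\pi\equiv c(\tau_1)$ then $\pi'\equiv c(\sigma_1)$ with $\sigma_1\le\tau_1$.
   Context: Types $\mathbb{T}_C\ni\tau ::= a\mid\alpha\mid\omega\mid\tau_1\to\tau_2\mid\tau_1\cap\tau_2\mid c(\tau)$ ($a$ constants, $\alpha$ type variables, $c$ unary constructors). Subtyping $\le$: least preorder with $\sigma\le\omega$; $\omega\le\omega\to\omega$; $\sigma\cap\tau\le\sigma$; $\sigma\cap\tau\le\tau$; $\sigma\le\tau_1,\sigma\le\tau_2\Rightarrow\sigma\le\tau_1\cap\tau_2$; $(\sigma\to\tau_1)\cap(\sigma\to\tau_2)\le\sigma\to\tau_1\cap\tau_2$; $\sigma_2\le\sigma_1,\tau_1\le\tau_2\Rightarrow\sigma_1\to\tau_1\le\sigma_2\to\tau_2$; $\tau_1\le\tau_2\Rightarrow c(\tau_1)\le c(\tau_2)$; $c(\tau_1)\cap c(\tau_2)\le c(\tau_1\cap\tau_2)$. Paths: $\pi ::= a\mid\alpha\mid\sigma\to\pi\mid c(\omega)\mid c(\pi)$.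 $\mathbb{P}(a)=\{a\}$, $\mathbb{P}(\alpha)=\{\alpha\}$, $\mathbb{P}(\omega)=\emptyset$, $\mathbb{P}(\sigma\to\tau)=\{\sigma\to\pi\mid\pi\in\mathbb{P}(\tau)\}$, $\mathbb{P}(\sigma\cap\tau)=\mathbb{P}(\sigma)\cup\mathbb{P}(\tau)$, $\mathbb{P}(c(\tau))=\{c(\omega)\}$ if $\mathbb{P}(\tau)=\emptyset$, else $\{c(\pi)\mid\pi\in\mathbb{P}(\tau)\}$. $\equiv$ denotes syntactic identity. *)

theory Defs
  imports Main
begin

datatype ('a, 'v, 'c) ty =
    Const 'a
  | TVar 'v
  | Omega
  | Arr "('a, 'v, 'c) ty" "('a, 'v, 'c) ty"
  | Inter "('a, 'v, 'c) ty" "('a, 'v, 'c) ty"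
  | Ctor 'c "('a, 'v, 'c) ty"

inductive subty :: "('a, 'v, 'c) ty \<Rightarrow> ('a, 'v, 'c) ty \<Rightarrow> bool" (infix "\<le>\<^sub>T" 50) where
  refl: "s \<le>\<^sub>T s"
| trans: "s \<le>\<^sub>T t \<Longrightarrow> t \<le>\<^sub>T u \<Longrightarrow> s \<le>\<^sub>T u"
| omega_top: "s \<le>\<^sub>T Omega"
| omega_arr: "Omega \<le>\<^sub>T Arr Omega Omega"
| inter_l: "Inter s t \<le>\<^sub>T s"
| inter_r: "Inter s t \<le>\<^sub>T t"
| inter_glb: "s \<le>\<^sub>T t1 \<Longrightarrow> s \<le>\<^sub>T t2 \<Longrightarrow> s \<le>\<^sub>T Inter t1 t2"
| arr_inter: "Inter (Arr s t1) (Arr s t2) \<le>\<^sub>T Arr s (Inter t1 t2)"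
| arr_sub: "s2 \<le>\<^sub>T s1 \<Longrightarrow> t1 \<le>\<^sub>T t2 \<Longrightarrow> Arr s1 t1 \<le>\<^sub>T Arr s2 t2"
| ctor_mono: "t1 \<le>\<^sub>T t2 \<Longrightarrow> Ctor c t1 \<le>\<^sub>T Ctor c t2"
| ctor_inter: "Inter (Ctor c t1) (Ctor c t2) \<le>\<^sub>T Ctor c (Inter t1 t2)"

fun paths :: "('a, 'v, 'c) ty \<Rightarrow> ('a, 'v, 'c) ty set" where
  "paths (Const a) = {Const a}"
| "paths (TVar v) = {TVar v}"
| "paths Omega = {}"
| "paths (Arr s t) = Arr s ` paths t"
| "paths (Inter s t) = paths s \<union> paths t"
| "paths (Ctor c t) = (if paths t = {} then {Ctor c Omega} else Ctor c ` paths t)"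

end

theory Submission
  imports Defs
begin

text \<open>Soundness: the path condition of the theorem, read as a relation between types, is a
preorder that is closed under every subtyping rule, so it follows by rule induction.
Completeness: each type lies below each of its paths, and it is the meet of its paths, in the
sense that any upward-closed set of types containing \<open>Omega\<close> and closed under \<open>Inter\<close>
contains a type as soon as it contains all of its paths; apply this to the types above \<open>\<sigma>\<close>.\<close>

definition refines_path :: "('a, 'v, 'c) ty \<Rightarrow> ('a, 'v, 'c) ty \<Rightarrow> bool" where
  "refines_path \<pi>' \<pi> \<longleftrightarrow> \<pi>' \<le>\<^sub>T \<pi> \<and>
       (\<forall>v. \<pi> = TVar v \<longrightarrow> \<pi>' = TVar v) \<and>
       (\<forall>a. \<pi> = Const a \<longrightarrow> \<pi>' = Const a) \<and>
       (\<forall>\<sigma>2 \<tau>2. \<pi> = Arr \<sigma>2 \<tau>2 \<longrightarrow>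
          (\<exists>\<sigma>1 \<tau>1. \<pi>' = Arr \<sigma>1 \<tau>1 \<and> \<sigma>2 \<le>\<^sub>T \<sigma>1 \<and> \<tau>1 \<le>\<^sub>T \<tau>2)) \<and>
       (\<forall>c \<tau>1. \<pi> = Ctor c \<tau>1 \<longrightarrow>
          (\<exists>\<sigma>1. \<pi>' = Ctor c \<sigma>1 \<and> \<sigma>1 \<le>\<^sub>T \<tau>1))"

definition paths_refine :: "('a, 'v, 'c) ty \<Rightarrow> ('a, 'v, 'c) ty \<Rightarrow> bool" where
  "paths_refine \<sigma> \<tau> \<longleftrightarrow> (\<forall>\<pi>\<in>paths \<tau>. \<exists>\<pi>'\<in>paths \<sigma>. refines_path \<pi>' \<pi>)"

lemma refines_path_refl: "refines_path \<pi> \<pi>"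
  unfolding refines_path_def by (auto intro: subty.refl)

lemma refines_path_trans:
  assumes "refines_path \<pi>1 \<pi>2" and "refines_path \<pi>2 \<pi>3"
  shows "refines_path \<pi>1 \<pi>3"
  using assms unfolding refines_path_def by (fastforce intro: subty.trans)

lemma paths_refine_subset: "paths \<tau> \<subseteq> paths \<sigma> \<Longrightarrow> paths_refine \<sigma> \<tau>"
  unfolding paths_refine_def using refines_path_refl by blast

lemma paths_refine_trans: "paths_refine \<sigma> \<tau> \<Longrightarrow> paths_refine \<tau> \<rho> \<Longrightarrow> paths_refine \<sigma> \<rho>"
  unfolding paths_refine_def by (meson refines_path_trans)

lemma paths_refine_Arr:
  assumes "\<sigma>2 \<le>\<^sub>T \<sigma>1" and "paths_refine \<tau>1 \<tau>2"
  shows "paths_refine (Arr \<sigma>1 \<tau>1) (Arr \<sigma>2 \<tau>2)"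
  unfolding paths_refine_def
proof
  fix \<pi> assume "\<pi> \<in> paths (Arr \<sigma>2 \<tau>2)"
  then obtain \<rho> where \<rho>: "\<rho> \<in> paths \<tau>2" "\<pi> = Arr \<sigma>2 \<rho>" by auto
  with assms(2) obtain \<rho>' where \<rho>': "\<rho>' \<in> paths \<tau>1" "refines_path \<rho>' \<rho>"
    unfolding paths_refine_def by blast
  have "refines_path (Arr \<sigma>1 \<rho>') \<pi>"
    using \<rho> \<rho>' assms(1) unfolding refines_path_def by (auto intro: subty.arr_sub)
  with \<rho>' show "\<exists>\<pi>'\<in>paths (Arr \<sigma>1 \<tau>1). refines_path \<pi>' \<pi>" by auto
qed

lemma paths_refine_Ctor:
  assumes "paths_refine \<sigma> \<tau>"
  shows "paths_refine (Ctor c \<sigma>) (Ctor c \<tau>)"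
  unfolding paths_refine_def
proof
  fix \<pi> assume \<pi>: "\<pi> \<in> paths (Ctor c \<tau>)"
  show "\<exists>\<pi>'\<in>paths (Ctor c \<sigma>). refines_path \<pi>' \<pi>"
  proof (cases "paths \<tau> = {}")
    case True
    then have "\<pi> = Ctor c Omega" using \<pi> by simp
    moreover obtain \<rho> where "Ctor c \<rho> \<in> paths (Ctor c \<sigma>)"
      by (cases "paths \<sigma> = {}") auto
    ultimately show ?thesis unfolding refines_path_def
      by (auto intro: subty.omega_top subty.ctor_mono)
  next
    case False
    then obtain \<rho> where \<rho>: "\<rho> \<in> paths \<tau>" "\<pi> = Ctor c \<rho>" using \<pi> by auto
    with assms obtain \<rho>' where \<rho>': "\<rho>' \<in> paths \<sigma>" "refines_path \<rho>' \<rho>"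
      unfolding paths_refine_def by blast
    then have "Ctor c \<rho>' \<in> paths (Ctor c \<sigma>)" by auto
    moreover have "refines_path (Ctor c \<rho>') \<pi>"
      using \<rho> \<rho>' unfolding refines_path_def by (auto intro: subty.ctor_mono)
    ultimately show ?thesis by blast
  qed
qed

lemma subty_paths_refine: "\<sigma> \<le>\<^sub>T \<tau> \<Longrightarrow> paths_refine \<sigma> \<tau>"
proof (induction rule: subty.induct)
  case (trans s t u)
  from trans.IH show ?case by (rule paths_refine_trans)
next
  case (inter_glb s t1 t2)
  then show ?case by (auto simp: paths_refine_def)
next
  case (arr_sub s2 s1 t1 t2)
  from arr_sub.hyps(1) arr_sub.IH(2) show ?case by (rule paths_refine_Arr)
next
  case (ctor_mono t1 t2 c)
  from ctor_mono.IH show ?case by (rule paths_refine_Ctor)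
next
  case (arr_inter s t1 t2)
  show ?case by (rule paths_refine_subset) (simp add: image_Un)
next
  case (ctor_inter c t1 t2)
  show ?case by (rule paths_refine_subset) auto
qed (auto simp: paths_refine_def intro: refines_path_refl)

lemma subty_path: "\<pi> \<in> paths \<tau> \<Longrightarrow> \<tau> \<le>\<^sub>T \<pi>"
proof (induction \<tau> arbitrary: \<pi>)
  case (Arr s t)
  then show ?case by (auto intro: subty.arr_sub subty.refl)
next
  case (Inter s t)
  then show ?case by (auto intro: subty.trans subty.inter_l subty.inter_r)
next
  case (Ctor c t)
  then show ?case by (auto split: if_splits intro: subty.ctor_mono subty.omega_top)
qed (auto intro: subty.refl)

lemma filter_mem_if_paths_mem:
  assumes up: "\<And>x y. P x \<Longrightarrow> x \<le>\<^sub>T y \<Longrightarrow> P y"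
    and inter: "\<And>x y. P x \<Longrightarrow> P y \<Longrightarrow> P (Inter x y)"
    and omega: "P Omega"
    and paths_mem: "\<forall>\<pi>\<in>paths \<tau>. P \<pi>"
  shows "P \<tau>"
  using up inter omega paths_mem
proof (induction \<tau> arbitrary: P)
  case (Arr s t)
  let ?P = "\<lambda>r. P (Arr s r)"
  show ?case
  proof (rule Arr.IH(2)[of ?P])
    show "\<And>x y. ?P x \<Longrightarrow> x \<le>\<^sub>T y \<Longrightarrow> ?P y"
      using Arr.prems(1)[OF _ subty.arr_sub[OF subty.refl]] by blast
    show "\<And>x y. ?P x \<Longrightarrow> ?P y \<Longrightarrow> ?P (Inter x y)"
      using Arr.prems(1)[OF Arr.prems(2) subty.arr_inter] by blast
    have "Omega \<le>\<^sub>T Arr s Omega"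
      by (rule subty.trans[OF subty.omega_arr subty.arr_sub[OF subty.omega_top subty.refl]])
    then show "?P Omega" using Arr.prems(1,3) by blast
    show "\<forall>\<pi>\<in>paths t. ?P \<pi>" using Arr.prems(4) by auto
  qed
next
  case (Inter s t)
  have "P s" using Inter.prems by (intro Inter.IH(1)[of P]) auto
  moreover have "P t" using Inter.prems by (intro Inter.IH(2)[of P]) auto
  ultimately show ?case by (rule Inter.prems(2))
next
  case (Ctor c t)
  let ?P = "\<lambda>r. P (Ctor c r)"
  show ?case
  proof (rule Ctor.IH[of ?P])
    show "\<And>x y. ?P x \<Longrightarrow> x \<le>\<^sub>T y \<Longrightarrow> ?P y"
      using Ctor.prems(1)[OF _ subty.ctor_mono] by blast
    show "\<And>x y. ?P x \<Longrightarrow> ?P y \<Longrightarrow> ?P (Inter x y)"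
      using Ctor.prems(1)[OF Ctor.prems(2) subty.ctor_inter] by blast
    show "?P Omega"
    proof (cases "paths t = {}")
      case True
      then show ?thesis using Ctor.prems(4) by simp
    next
      case False
      then obtain \<rho> where "\<rho> \<in> paths t" by auto
      with False Ctor.prems(4) have "P (Ctor c \<rho>)" by auto
      then show ?thesis using Ctor.prems(1)[OF _ subty.ctor_mono[OF subty.omega_top]] by blast
    qed
    show "\<forall>\<pi>\<in>paths t. ?P \<pi>" using Ctor.prems(4) by (auto split: if_splits)
  qed
qed auto

lemma paths_refine_subty:
  assumes "paths_refine \<sigma> \<tau>"
  shows "\<sigma> \<le>\<^sub>T \<tau>"
proof (rule filter_mem_if_paths_mem[where P = "\<lambda>r. \<sigma> \<le>\<^sub>T r"])
  show "\<forall>\<pi>\<in>paths \<tau>. \<sigma> \<le>\<^sub>T \<pi>"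
    using assms unfolding paths_refine_def refines_path_def by (meson subty_path subty.trans)
qed (blast intro: subty.trans subty.inter_glb subty.omega_top)+

theorem lemma4p10:
  fixes \<sigma> \<tau> :: "('a, 'v, 'c) ty"
  shows "\<sigma> \<le>\<^sub>T \<tau> \<longleftrightarrow>
    (\<forall>\<pi> \<in> paths \<tau>. \<exists>\<pi>' \<in> paths \<sigma>. \<pi>' \<le>\<^sub>T \<pi> \<and>
       (\<forall>v. \<pi> = TVar v \<longrightarrow> \<pi>' = TVar v) \<and>
       (\<forall>a. \<pi> = Const a \<longrightarrow> \<pi>' = Const a) \<and>
       (\<forall>\<sigma>2 \<tau>2. \<pi> = Arr \<sigma>2 \<tau>2 \<longrightarrow>
          (\<exists>\<sigma>1 \<tau>1. \<pi>' = Arr \<sigma>1 \<tau>1 \<and> \<sigma>2 \<le>\<^sub>T \<sigma>1 \<and> \<tau>1 \<le>\<^sub>T \<tau>2)) \<and>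
       (\<forall>c \<tau>1. \<pi> = Ctor c \<tau>1 \<longrightarrow>
          (\<exists>\<sigma>1. \<pi>' = Ctor c \<sigma>1 \<and> \<sigma>1 \<le>\<^sub>T \<tau>1)))"
  using subty_paths_refine[of \<sigma> \<tau>] paths_refine_subty[of \<sigma> \<tau>]
  unfolding paths_refine_def refines_path_def by (rule iffI)

end
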